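(* Let $q\in\Delta_1^m$ be a prior with all entries positive and $\Phi\in\mathbb{R}^{z\times m}$ a $q$-identifying signalling scheme with $\sum_\ell\phi^u_\ell q_\ell>0$ for all $u\in[z]$. For observed flows $\widetilde f^{\zeta^u}\in\mathcal{W}^{\widetilde q^{\zeta^u}}$, $u\in[z]$, define $$\mathcal{Q}^{=}_\Phi=\Big\{\psi\in\mathbb{R}^m:\ \mathbb{1}^\top\psi=1,\ \sum_{s\in[m]}\phi^u_s\big(C^{\theta_s}_p(\widetilde f^{\zeta^u})-C^{\theta_s}_r(\widetilde f^{\zeta^u})\big)\psi_s=0\ \ \forall u\in[z],\ \forall p,r\in\mathcal{P}\text{ with }\widetilde f^{\zeta^u}_p,\widetilde f^{\zeta^u}_r>0\Big\}.$$ If $\mathcal{Q}^{=}_\Phi=\{q\}$, then there exists $\delta>0$ such that for every $\widehat q\in\Delta_1^m$ with $\|q-\widehat q\|<\delta$, the scheme $\Phi$ is $\widehat q$-identifying.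
   Context: Let $\mathcal{G}=(\mathcal{V},\mathcal{E})$ be a finite directed graph with an origin $v_o$ and a destination $v_d$, and let $\mathcal{P}$ be the (finite) set of acyclic directed paths from $v_o$ to $v_d$, $n=|\mathcal{P}|$. The set of feasible path-flows is $\mathcal{H}=\{f\in\mathbb{R}^n_{\ge0}:\sum_{p\in\mathcal{P}}f_p=1\}$. For a path-flow $f$, the flow on edge $e_k$ is $f_{e_k}=\sum_{p\ni e_k}f_p$. There is a finite set of states $\Theta=\{\theta_1,\dots,\theta_m\}$; in each state $\theta_s$ each edge $e_k$ has a known cost function $C^{\theta_s}_{e_k}:\mathbb{R}_{\ge0}\to\mathbb{R}_{\ge0}$ that is continuous and strictly increasing. The cost of path $p$ in state $\theta_s$ is $C^{\theta_s}_p(f)=\sum_{e_k\in p}C^{\theta_s}_{e_k}(f_{e_k})$. For $\varphi\in\Delta_1^m:=\{x\in\mathbb{R}^m_{\ge0}:\sum_i x_i=1\}$ the expected cost of path $p$ is $C^\varphi_p(f)=\sum_{s}\varphi_sC^{\theta_s}_p(f)$. A flow $f\in\mathcal{H}$ is a $\varphi$-based Wardrop equilibrium ($\varphi$-WE) if for all $p$ with $f_p>0$ we have $C^\varphi_p(f)\le C^\varphi_r(f)$ for all $r\in\mathcal{P}$; $\mathcal{W}^\varphi$ denotes the set of $\varphi$-WE. A (public) signalling scheme with signals $\zeta^1,\dots,\zeta^z$ is a column-stochastic matrix $\Phi=(\phi^u_s)\in\mathbb{R}^{z\times m}_{\ge0}$, where $\phi^u_s$ is the probability of sending $\zeta^u$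 in state $\theta_s$. Given a prior $q$ (entries positive), the posterior after $\zeta^u$ is $\widetilde q^{\zeta^u}_s=\phi^u_sq_s/\sum_\ell\phi^u_\ell q_\ell$, and the observed flow under $\zeta^u$ is some $\widetilde f^{\zeta^u}\in\mathcal{W}^{\widetilde q^{\zeta^u}}$. The set $\mathcal{Q}_\Phi$ (relative to the prior $q$) consists of all $\psi\in\Delta_1^m$ such that for every signal $u$: $\sum_s\phi^u_s(C^{\theta_s}_p(\widetilde f^{\zeta^u})-C^{\theta_s}_r(\widetilde f^{\zeta^u}))\psi_s=0$ for all $p,r$ with $\widetilde f^{\zeta^u}_p,\widetilde f^{\zeta^u}_r>0$, and $\sum_s\phi^u_s(C^{\theta_s}_p(\widetilde f^{\zeta^u})-C^{\theta_s}_r(\widetilde f^{\zeta^u}))\psi_s\le0$ for all $p,r$ with $\widetilde f^{\zeta^u}_p>0$, $\widetilde f^{\zeta^u}_r=0$ (this set does not depend on which posterior-WE are observed). $\Phi$ is called $q$-identifying if $\mathcal{Q}_\Phi=\{q\}$; $\widehat q$-identifying is defined in the same way with $\widehat q$ as the prior generating the posteriors and observed flows. *)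

theory Defs
  imports Complex_Main
begin

definition path_edges :: "'v list \<Rightarrow> ('v \<times> 'v) set" where
  "path_edges p = set (zip p (tl p))"

definition od_paths :: "('v \<times> 'v) set \<Rightarrow> 'v \<Rightarrow> 'v \<Rightarrow> 'v list set" where
  "od_paths E vo vd = {p. p \<noteq> [] \<and> hd p = vo \<and> last p = vd \<and> distinct p \<and> path_edges p \<subseteq> E}"

definition edge_flow :: "'v list set \<Rightarrow> ('v list \<Rightarrow> real) \<Rightarrow> ('v \<times> 'v) \<Rightarrow> real" where
  "edge_flow P f e = (\<Sum>p\<in>{p\<in>P. e \<in> path_edges p}. f p)"

definition path_cost ::
  "(nat \<Rightarrow> ('v \<times> 'v) \<Rightarrow> real \<Rightarrow> real) \<Rightarrow> 'v list set \<Rightarrow> nat \<Rightarrow> ('v list \<Rightarrow> real) \<Rightarrow> 'v list \<Rightarrow> real" where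
  "path_cost C P s f p = (\<Sum>e\<in>path_edges p. C s e (edge_flow P f e))"

definition exp_cost ::
  "(nat \<Rightarrow> ('v \<times> 'v) \<Rightarrow> real \<Rightarrow> real) \<Rightarrow> nat \<Rightarrow> 'v list set \<Rightarrow> (nat \<Rightarrow> real) \<Rightarrow> ('v list \<Rightarrow> real) \<Rightarrow> 'v list \<Rightarrow> real" where
  "exp_cost C m P \<phi> f p = (\<Sum>s<m. \<phi> s * path_cost C P s f p)"

definition feasible_flow :: "'v list set \<Rightarrow> ('v list \<Rightarrow> real) \<Rightarrow> bool" where
  "feasible_flow P f \<longleftrightarrow> (\<forall>p\<in>P. f p \<ge> 0) \<and> (\<Sum>p\<in>P. f p) = 1"

definition wardrop ::
  "(nat \<Rightarrow> ('v \<times> 'v) \<Rightarrow> real \<Rightarrow> real) \<Rightarrow> nat \<Rightarrow> 'v list set \<Rightarrow> (nat \<Rightarrow> real) \<Rightarrow> ('v list \<Rightarrow> real) set" where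
  "wardrop C m P \<phi> = {f. feasible_flow P f \<and>
     (\<forall>p\<in>P. f p > 0 \<longrightarrow> (\<forall>r\<in>P. exp_cost C m P \<phi> f p \<le> exp_cost C m P \<phi> f r))}"

text \<open>Probability simplex in R^m, vectors represented as functions nat => real that
  vanish outside 0..<m.\<close>
definition simplex :: "nat \<Rightarrow> (nat \<Rightarrow> real) set" where
  "simplex m = {x. (\<forall>s<m. x s \<ge> 0) \<and> (\<Sum>s<m. x s) = 1 \<and> (\<forall>s\<ge>m. x s = 0)}"

text \<open>Signalling scheme: Phi u s = probability of signal u (u < z) in state s (s < m).\<close>
definition signalling_scheme :: "nat \<Rightarrow> nat \<Rightarrow> (nat \<Rightarrow> nat \<Rightarrow> real) \<Rightarrow> bool" where
  "signalling_scheme z m \<Phi> \<longleftrightarrow> (\<forall>u<z. \<forall>s<m. \<Phi> u s \<ge> 0) \<and> (\<forall>s<m. (\<Sum>u<z. \<Phi> u s) = 1)"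

definition posterior :: "nat \<Rightarrow> (nat \<Rightarrow> nat \<Rightarrow> real) \<Rightarrow> (nat \<Rightarrow> real) \<Rightarrow> nat \<Rightarrow> nat \<Rightarrow> real" where
  "posterior m \<Phi> q u = (\<lambda>s. if s < m then \<Phi> u s * q s / (\<Sum>l<m. \<Phi> u l * q l) else 0)"

definition cdiff ::
  "(nat \<Rightarrow> ('v \<times> 'v) \<Rightarrow> real \<Rightarrow> real) \<Rightarrow> nat \<Rightarrow> 'v list set \<Rightarrow> (nat \<Rightarrow> nat \<Rightarrow> real)
    \<Rightarrow> (nat \<Rightarrow> 'v list \<Rightarrow> real) \<Rightarrow> nat \<Rightarrow> 'v list \<Rightarrow> 'v list \<Rightarrow> (nat \<Rightarrow> real) \<Rightarrow> real" where
  "cdiff C m P \<Phi> F u p r \<psi> =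
     (\<Sum>s<m. \<Phi> u s * (path_cost C P s (F u) p - path_cost C P s (F u) r) * \<psi> s)"

definition Q_Phi ::
  "(nat \<Rightarrow> ('v \<times> 'v) \<Rightarrow> real \<Rightarrow> real) \<Rightarrow> nat \<Rightarrow> nat \<Rightarrow> 'v list set \<Rightarrow> (nat \<Rightarrow> nat \<Rightarrow> real)
    \<Rightarrow> (nat \<Rightarrow> 'v list \<Rightarrow> real) \<Rightarrow> (nat \<Rightarrow> real) set" where
  "Q_Phi C m z P \<Phi> F = {\<psi> \<in> simplex m. \<forall>u<z. \<forall>p\<in>P. \<forall>r\<in>P. F u p > 0 \<longrightarrow>
      ((F u r > 0 \<longrightarrow> cdiff C m P \<Phi> F u p r \<psi> = 0) \<and>
       (F u r = 0 \<longrightarrow> cdiff C m P \<Phi> F u p r \<psi> \<le> 0))}"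

text \<open>The set Q^=_Phi (affine, psi not required nonnegative).\<close>
definition Q_eq_Phi ::
  "(nat \<Rightarrow> ('v \<times> 'v) \<Rightarrow> real \<Rightarrow> real) \<Rightarrow> nat \<Rightarrow> nat \<Rightarrow> 'v list set \<Rightarrow> (nat \<Rightarrow> nat \<Rightarrow> real)
    \<Rightarrow> (nat \<Rightarrow> 'v list \<Rightarrow> real) \<Rightarrow> (nat \<Rightarrow> real) set" where
  "Q_eq_Phi C m z P \<Phi> F = {\<psi>. (\<forall>s\<ge>m. \<psi> s = 0) \<and> (\<Sum>s<m. \<psi> s) = 1 \<and>
      (\<forall>u<z. \<forall>p\<in>P. \<forall>r\<in>P. F u p > 0 \<longrightarrow> F u r > 0 \<longrightarrow> cdiff C m P \<Phi> F u p r \<psi> = 0)}"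

definition identifying ::
  "(nat \<Rightarrow> ('v \<times> 'v) \<Rightarrow> real \<Rightarrow> real) \<Rightarrow> nat \<Rightarrow> nat \<Rightarrow> 'v list set \<Rightarrow> (nat \<Rightarrow> nat \<Rightarrow> real)
    \<Rightarrow> (nat \<Rightarrow> real) \<Rightarrow> bool" where
  "identifying C m z P \<Phi> prior \<longleftrightarrow>
     (\<forall>F. (\<forall>u<z. F u \<in> wardrop C m P (posterior m \<Phi> prior u)) \<longrightarrow> Q_Phi C m z P \<Phi> F = {prior})"

end

theory Submission
  imports Defs
begin

text \<open>If \<open>\<Phi>\<close> failed to be identifying arbitrarily close to q, there would be priors
  \<open>Q\<^sub>n \<rightarrow> q\<close> with posterior equilibria \<open>G\<^sub>n\<close> and points of \<open>Q\<^sub>\<Phi>(G\<^sub>n)\<close> other than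
  \<open>Q\<^sub>n\<close>.  Edge flows of Wardrop equilibria depend continuously on the belief (the costs are
  strictly increasing), so eventually every edge used by the observed flows F is used by
  \<open>G\<^sub>n\<close>.  On paths built from edges used by \<open>G\<^sub>n\<close> a point of \<open>Q\<^sub>\<Phi>(G\<^sub>n)\<close> satisfies
  all equality constraints, by a potential argument on minimum-weight paths; hence the
  normalised difference of the two points is a direction along which the equality constraints
  hold on the support of F.  A limit l of these directions is nonzero, sums to 0 and satisfies
  the equality constraints at F, so \<open>q + l \<in> Q\<^sup>=\<^sub>\<Phi>\<close>, contradicting \<open>Q\<^sup>=\<^sub>\<Phi> = {q}\<close>.\<close>

section \<open>Paths\<close>

lemma path_edges_append_Cons:
  "path_edges (xs @ y # ys) = path_edges (xs @ [y]) \<union> path_edges (y # ys)"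
proof (induction xs)
  case Nil then show ?case by (simp add: path_edges_def)
next
  case (Cons a xs)
  then show ?case by (cases xs) (auto simp: path_edges_def)
qed

lemma path_edges_subset: "path_edges p \<subseteq> set p \<times> set (tl p)"
proof (induction p)
  case Nil then show ?case by (simp add: path_edges_def)
next
  case (Cons a p)
  then show ?case by (cases p) (auto simp: path_edges_def)
qed

lemma finite_path_edges [simp]: "finite (path_edges p)"
  by (simp add: path_edges_def)

lemma path_edges_imp_split: "(x, y) \<in> path_edges p \<Longrightarrow> \<exists>a b. p = a @ x # y # b"
proof (induction p)
  case Nil then show ?case by (simp add: path_edges_def)
next
  case (Cons c p)
  show ?case
  proof (cases p)
    case Nil then show ?thesis using Cons.prems by (simp add: path_edges_def)
  next
    case (Cons d p')
    show ?thesis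
    proof (cases "(x, y) = (c, d)")
      case True then show ?thesis using Cons by (intro exI[of _ "[]"] exI[of _ p']) auto
    next
      case False
      then have "(x, y) \<in> path_edges p" using Cons.prems Cons by (auto simp: path_edges_def)
      then obtain a b where "p = a @ x # y # b" using Cons.IH by blast
      then show ?thesis by (metis append_Cons)
    qed
  qed
qed

lemma path_edges_append_Cons_disjoint:
  assumes "distinct (a @ v # b)"
  shows "path_edges (a @ [v]) \<inter> path_edges (v # b) = {}"
proof -
  have "snd ` path_edges (a @ [v]) \<subseteq> set (a @ [v])" "snd ` path_edges (v # b) \<subseteq> set b"
    using path_edges_subset[of "a @ [v]"] path_edges_subset[of "v # b"] list.set_sel(2)[of "a @ [v]"]
    by fastforce+
  then show ?thesis using assms by fastforce
qed

lemma exists_path_within_walk: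
  "w \<noteq> [] \<Longrightarrow>
    \<exists>p. p \<noteq> [] \<and> distinct p \<and> hd p = hd w \<and> last p = last w \<and> path_edges p \<subseteq> path_edges w"
proof (induction "length w" arbitrary: w rule: less_induct)
  case less
  show ?case
  proof (cases "distinct w")
    case True then show ?thesis using less.prems by blast
  next
    case False
    then obtain xs ys zs y where w: "w = xs @ [y] @ ys @ [y] @ zs" using not_distinct_decomp by blast
    define w' where "w' = xs @ y # zs"
    have "length w' < length w" "w' \<noteq> []" by (simp_all add: w w'_def)
    then obtain p where
      p: "p \<noteq> [] \<and> distinct p \<and> hd p = hd w' \<and> last p = last w' \<and> path_edges p \<subseteq> path_edges w'"
      using less.hyps by blast
    have "path_edges w' \<subseteq> path_edges w"
      using path_edges_append_Cons[of xs y zs] path_edges_append_Cons[of xs y "ys @ y # zs"]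
        path_edges_append_Cons[of "y # ys" y zs]
      by (auto simp: w w'_def)
    moreover have "hd w' = hd w" by (cases xs) (auto simp: w w'_def)
    moreover have "last w' = last w" by (cases zs) (auto simp: w w'_def)
    ultimately show ?thesis using p by auto
  qed
qed

lemma finite_od_paths:
  assumes "finite E" shows "finite (od_paths E vo vd)"
proof -
  let ?A = "insert vo (snd ` E)"
  have "od_paths E vo vd \<subseteq> {xs. set xs \<subseteq> ?A \<and> distinct xs}"
  proof
    fix p assume "p \<in> od_paths E vo vd"
    then have p: "p \<noteq> []" "hd p = vo" "distinct p" "path_edges p \<subseteq> E" by (auto simp: od_paths_def)
    then obtain a l where pl: "p = a # l" by (cases p) auto
    have "set l \<subseteq> snd ` E"
    proof
      fix y assume "y \<in> set l"
      then have "y \<in> set (map snd (zip (a # l) l))" using map_snd_zip_take[of "a # l" l] by simp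
      then obtain x where "(x, y) \<in> set (zip (a # l) l)" by auto
      then have "(x, y) \<in> E" using p(4) pl by (auto simp: path_edges_def)
      then show "y \<in> snd ` E" by force
    qed
    then show "p \<in> {xs. set xs \<subseteq> ?A \<and> distinct xs}" using p pl by auto
  qed
  moreover have "finite {xs. set xs \<subseteq> ?A \<and> distinct xs}"
    by (rule finite_subset_distinct) (use assms in auto)
  ultimately show ?thesis by (rule finite_subset)
qed

section \<open>Additive path weights\<close>

definition path_weight :: "(('v \<times> 'v) \<Rightarrow> real) \<Rightarrow> 'v list \<Rightarrow> real" where
  "path_weight h p = (\<Sum>e\<in>path_edges p. h e)"

lemma path_weight_append_Cons:
  assumes "distinct (a @ v # b)"
  shows "path_weight h (a @ v # b) = path_weight h (a @ [v]) + path_weight h (v # b)"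
  unfolding path_weight_def path_edges_append_Cons[of a v b]
  by (rule sum.union_disjoint) (auto simp: path_edges_append_Cons_disjoint[OF assms])

lemma path_weight_snoc:
  assumes "distinct (c @ [v, w])"
  shows "path_weight h (c @ [v, w]) = path_weight h (c @ [v]) + h (v, w)"
  using path_weight_append_Cons[of c v "[w]" h] assms by (simp add: path_weight_def path_edges_def)

lemma path_weight_mono:
  assumes "\<forall>e\<in>E. h e \<ge> 0" "path_edges w \<subseteq> E" "path_edges p \<subseteq> path_edges w"
  shows "path_weight h p \<le> path_weight h w"
  unfolding path_weight_def using assms by (intro sum_mono2) auto

lemma path_weight_append_Cons_le:
  assumes "\<forall>e\<in>E. h e \<ge> 0" "path_edges (a @ v # b) \<subseteq> E"
  shows "path_weight h (a @ v # b) \<le> path_weight h (a @ [v]) + path_weight h (v # b)"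
proof -
  have "0 \<le> sum h (path_edges (a @ [v]) \<inter> path_edges (v # b))"
    using assms path_edges_append_Cons[of a v b] by (intro sum_nonneg) auto
  then show ?thesis
    unfolding path_weight_def path_edges_append_Cons[of a v b]
    using sum_Un[of "path_edges (a @ [v])" "path_edges (v # b)" h] by simp
qed

text \<open>Exchange argument: splicing the prefix of one minimum-weight path onto the suffix of
  another gives a walk from vo to vd, which contains an od-path of no larger weight.\<close>
lemma min_weight_prefix_le:
  assumes hnn: "\<forall>e\<in>E. h e \<ge> 0"
    and Pmin: "\<forall>r\<in>od_paths E vo vd. path_weight h p \<le> path_weight h r"
    and p: "a1 @ v # b1 \<in> od_paths E vo vd" and p': "a2 @ v # b2 \<in> od_paths E vo vd"
    and same: "path_weight h (a2 @ v # b2) = path_weight h p"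
  shows "path_weight h (a2 @ [v]) \<le> path_weight h (a1 @ [v])"
proof -
  define w where "w = a1 @ v # b2"
  obtain s where s: "s \<noteq> []" "distinct s" "hd s = hd w" "last s = last w" "path_edges s \<subseteq> path_edges w"
    using exists_path_within_walk[of w] by (auto simp: w_def)
  have "hd w = vo" using p unfolding w_def od_paths_def by (cases a1) auto
  moreover have "last w = vd" using p' unfolding w_def od_paths_def by (cases b2) auto
  moreover have ew: "path_edges w \<subseteq> E"
    using p p' path_edges_append_Cons[of a1 v b1] path_edges_append_Cons[of a2 v b2]
      path_edges_append_Cons[of a1 v b2]
    by (auto simp: w_def od_paths_def)
  ultimately have "s \<in> od_paths E vo vd" using s by (auto simp: od_paths_def)
  then have "path_weight h p \<le> path_weight h s" using Pmin by blast
  also have "\<dots> \<le> path_weight h w" using path_weight_mono[OF hnn ew s(5)] .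
  also have "\<dots> \<le> path_weight h (a1 @ [v]) + path_weight h (v # b2)"
    using path_weight_append_Cons_le[OF hnn ew[unfolded w_def]] by (simp add: w_def)
  finally have "path_weight h p \<le> path_weight h (a1 @ [v]) + path_weight h (v # b2)" .
  moreover have "distinct (a2 @ v # b2)" using p' unfolding od_paths_def by blast
  ultimately show ?thesis using same path_weight_append_Cons[of a2 v b2 h] by linarith
qed

text \<open>Consequently all minimum-weight paths of U passing through a vertex reach it with the same
  weight; along a path each of whose edges lies on some path of U, this potential grows exactly
  by the edge weights.\<close>
lemma covered_prefix_weight:
  assumes hnn: "\<forall>e\<in>E. h e \<ge> 0"
    and U: "U \<subseteq> od_paths E vo vd" and Umin: "\<forall>p\<in>U. path_weight h p = \<mu>"
    and Pmin: "\<forall>r\<in>od_paths E vo vd. \<mu> \<le> path_weight h r"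
    and r: "r \<in> od_paths E vo vd" and cov: "\<forall>e\<in>path_edges r. \<exists>p\<in>U. e \<in> path_edges p"
  shows "r = c @ d \<Longrightarrow> c \<noteq> [] \<Longrightarrow> a @ last c # b \<in> U \<Longrightarrow>
    path_weight h (a @ [last c]) = path_weight h c"
proof (induction c arbitrary: d a b rule: rev_induct)
  case Nil then show ?case by simp
next
  case (snoc w c')
  have rd: "hd r = vo" "distinct r" using r by (auto simp: od_paths_def)
  have prefix_eq: "path_weight h (a1 @ [v]) = path_weight h (a2 @ [v])"
    if p1: "a1 @ v # b1 \<in> U" and p2: "a2 @ v # b2 \<in> U" for a1 b1 a2 b2 v
  proof -
    have "a1 @ v # b1 \<in> od_paths E vo vd" "a2 @ v # b2 \<in> od_paths E vo vd" using p1 p2 U by auto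
    moreover have "\<forall>r\<in>od_paths E vo vd. path_weight h p \<le> path_weight h r" if "p \<in> U" for p
      using that Umin Pmin by simp
    ultimately show ?thesis
      using min_weight_prefix_le[OF hnn, of vo vd "a1 @ v # b1" a1 v b1 a2 b2]
        min_weight_prefix_le[OF hnn, of vo vd "a2 @ v # b2" a2 v b2 a1 b1] p1 p2 Umin
      by (simp add: order_antisym)
  qed
  show ?case
  proof (cases "c' = []")
    case True
    have "w = vo" using snoc.prems(1) True rd by simp
    moreover have "a @ w # b \<in> od_paths E vo vd" using snoc.prems(3) U by auto
    then have "hd (a @ w # b) = vo" "distinct (a @ w # b)" unfolding od_paths_def by blast+
    ultimately have "a = []" by (cases a) auto
    then show ?thesis using True by (simp add: path_weight_def)
  next
    case False
    then obtain c'' v where c': "c' = c'' @ [v]" by (cases c' rule: rev_cases) auto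
    have "(v, w) \<in> path_edges r"
      using snoc.prems(1) c' path_edges_append_Cons[of c'' v "w # d"] by (auto simp: path_edges_def)
    then obtain p' where p': "p' \<in> U" "(v, w) \<in> path_edges p'" using cov by blast
    obtain a' b' where p'd: "p' = a' @ v # w # b'" using path_edges_imp_split[OF p'(2)] by blast
    have "path_weight h (a' @ [v]) = path_weight h c'"
      using snoc.IH[of "w # d" a' "w # b'"] snoc.prems(1) p' p'd c' by simp
    moreover have "distinct p'" using p'(1) U by (auto simp: od_paths_def)
    then have "path_weight h (a' @ [v, w]) = path_weight h (a' @ [v]) + h (v, w)"
      using p'd by (intro path_weight_snoc) auto
    moreover have "path_weight h (c'' @ [v, w]) = path_weight h (c'' @ [v]) + h (v, w)"
      using rd snoc.prems(1) c' by (intro path_weight_snoc) auto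
    moreover have "path_weight h (a @ [w]) = path_weight h (a' @ [v, w])"
      using prefix_eq[of a w b "a' @ [v]" b'] snoc.prems(3) p'(1) p'd by simp
    ultimately show ?thesis using c' by simp
  qed
qed

lemma covered_path_min_weight:
  assumes hnn: "\<forall>e\<in>E. h e \<ge> 0"
    and U: "U \<subseteq> od_paths E vo vd" and Une: "U \<noteq> {}" and Umin: "\<forall>p\<in>U. path_weight h p = \<mu>"
    and Pmin: "\<forall>r\<in>od_paths E vo vd. \<mu> \<le> path_weight h r"
    and r: "r \<in> od_paths E vo vd" and cov: "\<forall>e\<in>path_edges r. \<exists>p\<in>U. e \<in> path_edges p"
  shows "path_weight h r = \<mu>"
proof -
  obtain p where p: "p \<in> U" using Une by blast
  then have "p \<in> od_paths E vo vd" using U by blast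
  then have "p = butlast p @ [last r]"
    using r unfolding od_paths_def by (metis (mono_tags) append_butlast_last_id mem_Collect_eq)
  moreover have "r \<noteq> []" using r by (simp add: od_paths_def)
  ultimately have "path_weight h (butlast p @ [last r]) = path_weight h r"
    using covered_prefix_weight[OF assms(1,2,4,5,6,7), of r "[]" "butlast p" "[]"] p by simp
  then show ?thesis using Umin p \<open>p = butlast p @ [last r]\<close> by metis
qed

section \<open>Wardrop equilibria\<close>

definition belief_edge_cost ::
  "(nat \<Rightarrow> ('v \<times> 'v) \<Rightarrow> real \<Rightarrow> real) \<Rightarrow> nat \<Rightarrow> (nat \<Rightarrow> real)
    \<Rightarrow> ('v \<times> 'v) \<Rightarrow> real \<Rightarrow> real" where
  "belief_edge_cost C m \<phi> e t = (\<Sum>s<m. \<phi> s * C s e t)"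

lemma exp_cost_eq_path_weight:
  "exp_cost C m P \<phi> f p = path_weight (\<lambda>e. belief_edge_cost C m \<phi> e (edge_flow P f e)) p"
  unfolding exp_cost_def path_cost_def path_weight_def belief_edge_cost_def
  by (simp add: sum_distrib_left sum.swap[of _ "{..<m}"])

lemma simplex_exists_pos:
  assumes "\<phi> \<in> simplex m" obtains s where "s < m" "\<phi> s > 0"
proof -
  have "\<not> (\<forall>s<m. \<phi> s \<le> 0)"
  proof
    assume "\<forall>s<m. \<phi> s \<le> 0"
    then have "(\<Sum>s<m. \<phi> s) \<le> 0" by (intro sum_nonpos) auto
    with assms show False by (simp add: simplex_def)
  qed
  then show ?thesis using that by (auto simp: not_le)
qed

lemma belief_edge_cost_strict_mono_on:
  assumes \<phi>: "\<phi> \<in> simplex m" and C: "\<forall>s<m. strict_mono_on {0..} (C s e)"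
  shows "strict_mono_on {0..} (belief_edge_cost C m \<phi> e)"
proof (rule strict_mono_onI)
  fix u v :: real assume uv: "u \<in> {0..}" "v \<in> {0..}" "u < v"
  obtain s0 where s0: "s0 < m" "\<phi> s0 > 0" using simplex_exists_pos[OF \<phi>] .
  have "0 < (\<Sum>s<m. \<phi> s * (C s e v - C s e u))"
  proof (rule sum_pos2[of _ s0])
    show "0 < \<phi> s0 * (C s0 e v - C s0 e u)"
      using s0 C uv strict_mono_onD[of "{0..}" "C s0 e" u v] by simp
    show "0 \<le> \<phi> s * (C s e v - C s e u)" if "s \<in> {..<m}" for s
      using that \<phi> C uv strict_mono_on_leD[of "{0..}" "C s e" u v] by (simp add: simplex_def)
  qed (use s0 in auto)
  then show "belief_edge_cost C m \<phi> e u < belief_edge_cost C m \<phi> e v"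
    unfolding belief_edge_cost_def by (simp add: sum_subtractf right_diff_distrib)
qed

lemma edge_flow_nonneg: "feasible_flow P f \<Longrightarrow> 0 \<le> edge_flow P f e"
  unfolding edge_flow_def feasible_flow_def by (intro sum_nonneg) auto

lemma edge_flow_le_one:
  assumes "feasible_flow P f" "finite P" shows "edge_flow P f e \<le> 1"
proof -
  have "edge_flow P f e \<le> sum f P"
    using assms unfolding edge_flow_def feasible_flow_def by (intro sum_mono2) auto
  then show ?thesis using assms(1) by (simp add: feasible_flow_def)
qed

lemma wardrop_min_cost:
  assumes "f \<in> wardrop C m P \<phi>" "finite P"
  obtains p0 where "p0 \<in> P" "f p0 > 0"
    "\<forall>p\<in>P. f p > 0 \<longrightarrow> exp_cost C m P \<phi> f p = exp_cost C m P \<phi> f p0"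
    "\<forall>r\<in>P. exp_cost C m P \<phi> f p0 \<le> exp_cost C m P \<phi> f r"
proof -
  have nn: "\<forall>p\<in>P. f p \<ge> 0" and s1: "sum f P = 1" and we:
    "\<forall>p\<in>P. f p > 0 \<longrightarrow> (\<forall>r\<in>P. exp_cost C m P \<phi> f p \<le> exp_cost C m P \<phi> f r)"
    using assms(1) by (auto simp: feasible_flow_def wardrop_def)
  have "\<not> (\<forall>p\<in>P. f p = 0)" using s1 by (metis sum.neutral zero_neq_one)
  then obtain p0 where "p0 \<in> P" "f p0 \<noteq> 0" by blast
  then have p0: "p0 \<in> P" "f p0 > 0" using nn by (auto simp: less_eq_real_def)
  show ?thesis using that[OF p0] we p0 by (meson order_antisym)
qed

lemma sum_flow_path_weight:
  assumes "finite P" "finite E" "\<forall>p\<in>P. path_edges p \<subseteq> E"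
  shows "(\<Sum>p\<in>P. g p * path_weight k p) = (\<Sum>e\<in>E. k e * edge_flow P g e)"
proof -
  have "(\<Sum>p\<in>P. g p * path_weight k p) = (\<Sum>p\<in>P. \<Sum>e\<in>{e\<in>E. e \<in> path_edges p}. g p * k e)"
  proof (rule sum.cong[OF refl])
    fix p assume "p \<in> P"
    then have "{e\<in>E. e \<in> path_edges p} = path_edges p" using assms(3) by auto
    then show "g p * path_weight k p = (\<Sum>e\<in>{e\<in>E. e \<in> path_edges p}. g p * k e)"
      by (simp add: path_weight_def sum_distrib_left)
  qed
  also have "\<dots> = (\<Sum>e\<in>E. \<Sum>p\<in>{p\<in>P. e \<in> path_edges p}. g p * k e)"
    by (rule sum.swap_restrict[OF assms(1,2)])
  also have "\<dots> = (\<Sum>e\<in>E. k e * edge_flow P g e)"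
    unfolding edge_flow_def by (simp add: sum_distrib_left sum_distrib_right mult.commute)
  finally show ?thesis .
qed

text \<open>Averaging the equilibrium conditions over the path flows of g turns them into the
  variational inequality for the edge flows.\<close>
lemma wardrop_variational_inequality:
  assumes f: "f \<in> wardrop C m P \<phi>" and g: "feasible_flow P g"
    and fin: "finite P" "finite E" and sub: "\<forall>p\<in>P. path_edges p \<subseteq> E"
  shows "0 \<le> (\<Sum>e\<in>E. belief_edge_cost C m \<phi> e (edge_flow P f e) * (edge_flow P g e - edge_flow P f e))"
proof -
  define k where "k e = belief_edge_cost C m \<phi> e (edge_flow P f e)" for e
  obtain p0 where p0: "\<forall>p\<in>P. f p > 0 \<longrightarrow> path_weight k p = path_weight k p0"
    "\<forall>r\<in>P. path_weight k p0 \<le> path_weight k r"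
    using wardrop_min_cost[OF f fin(1)] unfolding exp_cost_eq_path_weight k_def by metis
  have fnn: "\<forall>p\<in>P. f p \<ge> 0" and fs: "sum f P = 1" using f by (auto simp: feasible_flow_def wardrop_def)
  have gnn: "\<forall>p\<in>P. g p \<ge> 0" and gs: "sum g P = 1" using g by (auto simp: feasible_flow_def)
  have "(\<Sum>p\<in>P. f p * path_weight k p) = (\<Sum>p\<in>P. f p * path_weight k p0)"
    using p0(1) fnn by (intro sum.cong) (auto simp: less_eq_real_def)
  also have "\<dots> = path_weight k p0" using fs by (simp add: sum_distrib_right[symmetric])
  also have "\<dots> = (\<Sum>p\<in>P. g p * path_weight k p0)" using gs by (simp add: sum_distrib_right[symmetric])
  also have "\<dots> \<le> (\<Sum>p\<in>P. g p * path_weight k p)"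
    using p0(2) gnn by (intro sum_mono mult_left_mono) auto
  finally have "(\<Sum>e\<in>E. k e * edge_flow P f e) \<le> (\<Sum>e\<in>E. k e * edge_flow P g e)"
    unfolding sum_flow_path_weight[OF fin sub] .
  moreover have "(\<Sum>e\<in>E. k e * (edge_flow P g e - edge_flow P f e))
      = (\<Sum>e\<in>E. k e * edge_flow P g e) - (\<Sum>e\<in>E. k e * edge_flow P f e)"
    by (simp add: right_diff_distrib sum_subtractf)
  ultimately show ?thesis unfolding k_def by linarith
qed

text \<open>Monotonicity argument: the variational inequalities for the two beliefs, added up, bound
  the monotone gap by the change in belief.\<close>
lemma wardrop_gap_le:
  assumes fin: "finite P" "finite E" and sub: "\<forall>p\<in>P. path_edges p \<subseteq> E"
    and cost: "\<forall>s<m. \<forall>e\<in>E. strict_mono_on {0..} (C s e) \<and> (\<forall>x\<ge>0. C s e x \<ge> 0)"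
    and f: "f \<in> wardrop C m P \<phi>" and g: "g \<in> wardrop C m P \<phi>'"
  shows "(\<Sum>e\<in>E. (belief_edge_cost C m \<phi> e (edge_flow P g e) - belief_edge_cost C m \<phi> e (edge_flow P f e))
            * (edge_flow P g e - edge_flow P f e))
       \<le> (\<Sum>e\<in>E. \<Sum>s<m. \<bar>\<phi> s - \<phi>' s\<bar> * C s e 1)"
proof -
  define x where "x e = edge_flow P f e" for e
  define y where "y e = edge_flow P g e" for e
  define c where "c e = belief_edge_cost C m \<phi> e" for e
  define c' where "c' e = belief_edge_cost C m \<phi>' e" for e
  have ff: "feasible_flow P f" and fg: "feasible_flow P g" using f g by (simp_all add: wardrop_def)
  have x01: "0 \<le> x e" "x e \<le> 1" and y01: "0 \<le> y e" "y e \<le> 1" for e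
    unfolding x_def y_def using ff fg fin(1) by (simp_all add: edge_flow_nonneg edge_flow_le_one)
  have VI1: "0 \<le> (\<Sum>e\<in>E. c e (x e) * (y e - x e))"
    using wardrop_variational_inequality[OF f fg fin sub] unfolding c_def x_def y_def .
  have VI2: "0 \<le> (\<Sum>e\<in>E. c' e (y e) * (x e - y e))"
    using wardrop_variational_inequality[OF g ff fin sub] unfolding c'_def x_def y_def .
  have "(\<Sum>e\<in>E. (c e (y e) - c e (x e)) * (y e - x e)) = (\<Sum>e\<in>E. (c e (y e) - c' e (y e)) * (y e - x e)
       - c e (x e) * (y e - x e) - c' e (y e) * (x e - y e))"
    by (rule sum.cong) (simp_all add: algebra_simps)
  also have "\<dots> = (\<Sum>e\<in>E. (c e (y e) - c' e (y e)) * (y e - x e))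
       - (\<Sum>e\<in>E. c e (x e) * (y e - x e)) - (\<Sum>e\<in>E. c' e (y e) * (x e - y e))"
    by (simp add: sum_subtractf)
  also have "\<dots> \<le> (\<Sum>e\<in>E. (c e (y e) - c' e (y e)) * (y e - x e))"
    using VI1 VI2 by linarith
  also have "\<dots> \<le> (\<Sum>e\<in>E. \<Sum>s<m. \<bar>\<phi> s - \<phi>' s\<bar> * C s e 1)"
  proof (rule sum_mono)
    fix e assume e: "e \<in> E"
    have "(c e (y e) - c' e (y e)) * (y e - x e) \<le> \<bar>c e (y e) - c' e (y e)\<bar> * \<bar>y e - x e\<bar>"
      by (metis abs_ge_self abs_mult)
    also have "\<dots> \<le> \<bar>c e (y e) - c' e (y e)\<bar>"
      using x01[of e] y01[of e] by (intro mult_left_le) auto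
    also have "\<dots> = \<bar>\<Sum>s<m. (\<phi> s - \<phi>' s) * C s e (y e)\<bar>"
      unfolding c_def c'_def belief_edge_cost_def by (simp add: sum_subtractf[symmetric] left_diff_distrib)
    also have "\<dots> \<le> (\<Sum>s<m. \<bar>\<phi> s - \<phi>' s\<bar> * C s e 1)"
    proof (rule order_trans[OF sum_abs sum_mono])
      fix s assume "s \<in> {..<m}"
      then have "0 \<le> C s e (y e)" "C s e (y e) \<le> C s e 1"
        using cost e y01[of e] strict_mono_on_leD[of "{0..}" "C s e" "y e" 1] by auto
      then show "\<bar>(\<phi> s - \<phi>' s) * C s e (y e)\<bar> \<le> \<bar>\<phi> s - \<phi>' s\<bar> * C s e 1"
        by (simp add: abs_mult mult_left_mono)
    qed
    finally show "(c e (y e) - c' e (y e)) * (y e - x e) \<le> (\<Sum>s<m. \<bar>\<phi> s - \<phi>' s\<bar> * C s e 1)" .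
  qed
  finally show ?thesis unfolding c_def x_def y_def .
qed

lemma strict_mono_on_gap_nonneg:
  fixes c :: "real \<Rightarrow> real"
  assumes "strict_mono_on A c" "x \<in> A" "y \<in> A"
  shows "0 \<le> (c y - c x) * (y - x)"
proof (cases "x \<le> y")
  case True
  then have "c x \<le> c y" using strict_mono_on_leD[OF assms] by blast
  then show ?thesis using True by simp
next
  case False
  then have "c y \<le> c x" using strict_mono_on_leD[OF assms(1,3,2)] by simp
  then show ?thesis using False by (simp add: mult_nonpos_nonpos)
qed

text \<open>Outside an \<open>\<epsilon>\<close>-neighbourhood of x the gap is at least \<open>\<epsilon>\<close> times
  the positive jump of c across that neighbourhood.\<close>
lemma tendsto_of_gap_tendsto_zero:
  fixes c :: "real \<Rightarrow> real"
  assumes c: "strict_mono_on {0..} c" and x: "0 \<le> x" and y: "\<And>n. 0 \<le> y n"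
    and gap: "(\<lambda>n. (c (y n) - c x) * (y n - x)) \<longlonglongrightarrow> 0"
  shows "y \<longlonglongrightarrow> x"
  unfolding LIMSEQ_iff
proof (intro allI impI)
  fix \<epsilon> :: real assume \<epsilon>: "\<epsilon> > 0"
  define a where "a = c (x + \<epsilon>) - c x"
  define b where "b = (if \<epsilon> \<le> x then c x - c (x - \<epsilon>) else 1)"
  have a: "a > 0" unfolding a_def using strict_mono_onD[OF c, of x "x + \<epsilon>"] x \<epsilon> by simp
  have b: "b > 0" unfolding b_def using strict_mono_onD[OF c, of "x - \<epsilon>" x] \<epsilon> by auto
  have pos: "\<epsilon> * min a b > 0" using a b \<epsilon> by simp
  obtain N where N: "\<forall>n\<ge>N. \<bar>(c (y n) - c x) * (y n - x)\<bar> < \<epsilon> * min a b"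
    using gap[unfolded LIMSEQ_iff, rule_format, OF pos] by auto
  show "\<exists>N. \<forall>n\<ge>N. norm (y n - x) < \<epsilon>"
  proof (intro exI allI impI)
    fix n assume "n \<ge> N"
    then have small: "(c (y n) - c x) * (y n - x) < \<epsilon> * min a b" using N by fastforce
    have "\<bar>y n - x\<bar> < \<epsilon>"
    proof (rule ccontr)
      assume "\<not> ?thesis"
      then consider "x + \<epsilon> \<le> y n" | "y n \<le> x - \<epsilon>" by linarith
      then show False
      proof cases
        case 1
        have "a \<le> c (y n) - c x" unfolding a_def
          using strict_mono_on_leD[OF c, of "x + \<epsilon>" "y n"] x \<epsilon> 1 by simp
        then have "a * \<epsilon> \<le> (c (y n) - c x) * (y n - x)" using 1 a \<epsilon> by (intro mult_mono) auto
        moreover have "\<epsilon> * min a b \<le> a * \<epsilon>" using \<epsilon> by (simp add: mult.commute mult_left_mono)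
        ultimately show False using small by linarith
      next
        case 2
        then have "\<epsilon> \<le> x" using y[of n] by linarith
        have "b \<le> c x - c (y n)" unfolding b_def
          using strict_mono_on_leD[OF c, of "y n" "x - \<epsilon>"] y[of n] 2 \<open>\<epsilon> \<le> x\<close> by simp
        then have "b * \<epsilon> \<le> (c x - c (y n)) * (x - y n)" using 2 b \<epsilon> by (intro mult_mono) auto
        also have "\<dots> = (c (y n) - c x) * (y n - x)" by (simp add: algebra_simps)
        finally have "b * \<epsilon> \<le> (c (y n) - c x) * (y n - x)" .
        moreover have "\<epsilon> * min a b \<le> b * \<epsilon>" using \<epsilon> by (simp add: mult.commute mult_left_mono)
        ultimately show False using small by linarith
      qed
    qed
    then show "norm (y n - x) < \<epsilon>" by simp
  qed
qed

lemma wardrop_edge_flow_tendsto: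
  fixes \<phi>n :: "nat \<Rightarrow> nat \<Rightarrow> real"
  assumes fin: "finite P" "finite E" and sub: "\<forall>p\<in>P. path_edges p \<subseteq> E"
    and cost: "\<forall>s<m. \<forall>e\<in>E. strict_mono_on {0..} (C s e) \<and> (\<forall>x\<ge>0. C s e x \<ge> 0)"
    and \<phi>: "\<phi> \<in> simplex m" and lim: "\<forall>s<m. (\<lambda>n. \<phi>n n s) \<longlonglongrightarrow> \<phi> s"
    and f: "f \<in> wardrop C m P \<phi>" and fn: "\<And>n. fn n \<in> wardrop C m P (\<phi>n n)"
    and e: "e \<in> E"
  shows "(\<lambda>n. edge_flow P (fn n) e) \<longlonglongrightarrow> edge_flow P f e"
proof -
  define c where "c = belief_edge_cost C m \<phi>"
  define T where "T n e = (c e (edge_flow P (fn n) e) - c e (edge_flow P f e))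
    * (edge_flow P (fn n) e - edge_flow P f e)" for n e
  define \<rho> where "\<rho> n = (\<Sum>e\<in>E. \<Sum>s<m. \<bar>\<phi> s - \<phi>n n s\<bar> * C s e 1)" for n
  have mono: "strict_mono_on {0..} (c e)" if "e \<in> E" for e
    unfolding c_def using cost that by (intro belief_edge_cost_strict_mono_on[OF \<phi>]) auto
  have ff: "feasible_flow P f" and ffn: "feasible_flow P (fn n)" for n
    using f fn by (simp_all add: wardrop_def)
  have T_nonneg: "0 \<le> T n e" if "e \<in> E" for n e
    unfolding T_def
    by (rule strict_mono_on_gap_nonneg[OF mono[OF that]]) (simp_all add: ff ffn edge_flow_nonneg)
  have T_le: "T n e \<le> \<rho> n" for n
  proof -
    have "T n e \<le> (\<Sum>e\<in>E. T n e)" using T_nonneg e fin(2) by (intro member_le_sum) auto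
    also have "\<dots> \<le> \<rho> n" unfolding T_def c_def \<rho>_def by (rule wardrop_gap_le[OF fin sub cost f fn])
    finally show ?thesis .
  qed
  have "\<rho> \<longlonglongrightarrow> (\<Sum>e\<in>E. \<Sum>s<m. \<bar>\<phi> s - \<phi> s\<bar> * C s e 1)"
    unfolding \<rho>_def
    by (intro tendsto_sum tendsto_mult tendsto_rabs tendsto_diff tendsto_const) (use lim in auto)
  then have \<rho>_lim: "\<rho> \<longlonglongrightarrow> 0" by simp
  have "(\<lambda>n. T n e) \<longlonglongrightarrow> 0"
  proof (rule real_tendsto_sandwich[where f = "\<lambda>_. 0" and h = \<rho>])
    show "eventually (\<lambda>n. 0 \<le> T n e) sequentially" using T_nonneg[OF e] by simp
    show "eventually (\<lambda>n. T n e \<le> \<rho> n) sequentially" using T_le by simp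
  qed (simp_all add: \<rho>_lim)
  then show ?thesis
    using tendsto_of_gap_tendsto_zero[OF mono[OF e], of "edge_flow P f e" "\<lambda>n. edge_flow P (fn n) e"]
    unfolding T_def by (simp add: ff ffn edge_flow_nonneg)
qed

section \<open>The sets Q_Phi and Q_Phi^=\<close>

lemma cdiff_eq_path_weight_diff:
  fixes C m P \<Phi> G u \<psi>
  defines "h \<equiv> \<lambda>e. \<Sum>s<m. \<Phi> u s * C s e (edge_flow P (G u) e) * \<psi> s"
  shows "cdiff C m P \<Phi> G u p r \<psi> = path_weight h p - path_weight h r"
proof -
  have "path_weight h p = (\<Sum>s<m. \<Phi> u s * path_cost C P s (G u) p * \<psi> s)" for p
    unfolding h_def path_weight_def path_cost_def
    by (simp add: sum.swap[of _ "path_edges p"] sum_distrib_left sum_distrib_right)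
  then show ?thesis unfolding cdiff_def
    by (simp add: sum_subtractf[symmetric] right_diff_distrib left_diff_distrib)
qed

lemma cdiff_linear:
  "cdiff C m P \<Phi> G u p r (\<lambda>s. a * \<psi> s + b * \<psi>' s)
     = a * cdiff C m P \<Phi> G u p r \<psi> + b * cdiff C m P \<Phi> G u p r \<psi>'"
  unfolding cdiff_def sum_distrib_left sum.distrib[symmetric]
  by (rule sum.cong) (simp_all add: algebra_simps)

lemma cdiff_prior_eq:
  assumes "(\<Sum>l<m. \<Phi> u l * qh l) \<noteq> 0"
  shows "cdiff C m P \<Phi> G u p r qh = (\<Sum>l<m. \<Phi> u l * qh l) *
    (exp_cost C m P (posterior m \<Phi> qh u) (G u) p - exp_cost C m P (posterior m \<Phi> qh u) (G u) r)"
proof -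
  define N where "N = (\<Sum>l<m. \<Phi> u l * qh l)"
  have "N * exp_cost C m P (posterior m \<Phi> qh u) (G u) p
      = (\<Sum>s<m. \<Phi> u s * path_cost C P s (G u) p * qh s)" for p
  proof -
    have "N * exp_cost C m P (posterior m \<Phi> qh u) (G u) p
        = (\<Sum>s<m. N * (\<Phi> u s * qh s / N * path_cost C P s (G u) p))"
      unfolding exp_cost_def posterior_def N_def by (simp add: sum_distrib_left)
    also have "\<dots> = (\<Sum>s<m. \<Phi> u s * path_cost C P s (G u) p * qh s)"
      using assms N_def by (intro sum.cong) (auto simp: field_simps)
    finally show ?thesis .
  qed
  then show ?thesis unfolding N_def[symmetric] right_diff_distrib cdiff_def
    by (simp add: sum_subtractf[symmetric] algebra_simps)
qed

lemma prior_in_Q_Phi: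
  assumes qh: "qh \<in> simplex m"
    and G: "\<forall>u<z. G u \<in> wardrop C m P (posterior m \<Phi> qh u)"
    and N: "\<forall>u<z. (\<Sum>l<m. \<Phi> u l * qh l) > 0"
  shows "qh \<in> Q_Phi C m z P \<Phi> G"
  unfolding Q_Phi_def
proof (intro CollectI conjI qh allI impI ballI)
  fix u p r assume u: "u < z" and p: "p \<in> P" and r: "r \<in> P" and pos: "0 < G u p"
  let ?c = "exp_cost C m P (posterior m \<Phi> qh u) (G u)"
  have eq: "cdiff C m P \<Phi> G u p r qh = (\<Sum>l<m. \<Phi> u l * qh l) * (?c p - ?c r)"
    using N u by (intro cdiff_prior_eq) fastforce
  have we: "\<forall>p\<in>P. G u p > 0 \<longrightarrow> (\<forall>r\<in>P. ?c p \<le> ?c r)" using G u by (auto simp: wardrop_def)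
  then have "?c p \<le> ?c r" using p r pos by blast
  then show "cdiff C m P \<Phi> G u p r qh \<le> 0"
    using N u unfolding eq by (intro mult_nonneg_nonpos) (auto simp: less_imp_le)
  show "cdiff C m P \<Phi> G u p r qh = 0" if "0 < G u r"
    using \<open>?c p \<le> ?c r\<close> we p r that unfolding eq by (metis order_antisym diff_self mult_zero_right)
qed

text \<open>For \<psi> in Q_Phi the weights of the cost difference form a nonnegative edge weight under
  which the paths used by G u have minimal weight; a path covered by edges in the support of
  G u then has the same, minimal, weight.\<close>
lemma Q_Phi_cdiff_zero_on_covered:
  assumes finE: "finite E"
    and cost: "\<forall>s<m. \<forall>e\<in>E. \<forall>x\<ge>0. C s e x \<ge> 0"
    and \<Phi>: "\<forall>u<z. \<forall>s<m. \<Phi> u s \<ge> 0"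
    and \<psi>: "\<psi> \<in> Q_Phi C m z (od_paths E vo vd) \<Phi> G"
    and u: "u < z" and G: "G u \<in> wardrop C m (od_paths E vo vd) \<phi>"
    and p: "p \<in> od_paths E vo vd" and r: "r \<in> od_paths E vo vd"
    and cov: "\<forall>a\<in>{p, r}. \<forall>e\<in>path_edges a. edge_flow (od_paths E vo vd) (G u) e > 0"
  shows "cdiff C m (od_paths E vo vd) \<Phi> G u p r \<psi> = 0"
proof -
  let ?P = "od_paths E vo vd"
  define h where "h e = (\<Sum>s<m. \<Phi> u s * C s e (edge_flow ?P (G u) e) * \<psi> s)" for e
  have cdiff_h: "cdiff C m ?P \<Phi> G u a b \<psi> = path_weight h a - path_weight h b" for a b
    unfolding h_def by (rule cdiff_eq_path_weight_diff)
  have Gf: "feasible_flow ?P (G u)" using G by (simp add: wardrop_def)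
  then have Gnn: "\<forall>p\<in>?P. G u p \<ge> 0" by (simp add: feasible_flow_def)
  have \<psi>Q: "\<forall>p\<in>?P. \<forall>r\<in>?P. G u p > 0 \<longrightarrow>
      ((G u r > 0 \<longrightarrow> cdiff C m ?P \<Phi> G u p r \<psi> = 0) \<and> (G u r = 0 \<longrightarrow> cdiff C m ?P \<Phi> G u p r \<psi> \<le> 0))"
    using \<psi> u by (auto simp: Q_Phi_def)
  have \<psi>_nonneg: "\<forall>s<m. 0 \<le> \<psi> s" using \<psi> by (simp add: Q_Phi_def simplex_def)
  have hnn: "\<forall>e\<in>E. h e \<ge> 0"
    unfolding h_def using cost \<Phi> u \<psi>_nonneg edge_flow_nonneg[OF Gf] by (auto intro!: sum_nonneg)
  define U where "U = {p\<in>?P. G u p > 0}"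
  obtain p0 where p0: "p0 \<in> ?P" "G u p0 > 0" using wardrop_min_cost[OF G finite_od_paths[OF finE]] by metis
  have Umin: "\<forall>p\<in>U. path_weight h p = path_weight h p0"
  proof
    fix p assume "p \<in> U"
    then have "cdiff C m ?P \<Phi> G u p0 p \<psi> = 0" using \<psi>Q p0 unfolding U_def by blast
    then show "path_weight h p = path_weight h p0" unfolding cdiff_h by simp
  qed
  have Pmin: "\<forall>r\<in>?P. path_weight h p0 \<le> path_weight h r"
  proof
    fix r assume r: "r \<in> ?P"
    then have "G u r > 0 \<or> G u r = 0" using Gnn by force
    then have "cdiff C m ?P \<Phi> G u p0 r \<psi> \<le> 0" using \<psi>Q p0 r by auto
    then show "path_weight h p0 \<le> path_weight h r" unfolding cdiff_h by simp
  qed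
  have covU: "\<forall>e\<in>path_edges a. \<exists>p\<in>U. e \<in> path_edges p" if "a \<in> {p, r}" for a
  proof
    fix e assume "e \<in> path_edges a"
    then have "edge_flow ?P (G u) e \<noteq> 0" using cov that by (metis less_irrefl)
    then obtain p' where p': "p' \<in> ?P" "e \<in> path_edges p'" "G u p' \<noteq> 0"
      unfolding edge_flow_def by (auto elim: sum.not_neutral_contains_not_neutral)
    then have "p' \<in> U" unfolding U_def using Gnn by (auto simp: less_le)
    then show "\<exists>p\<in>U. e \<in> path_edges p" using p'(2) by blast
  qed
  have UP: "U \<subseteq> ?P" and Une: "U \<noteq> {}" using p0 unfolding U_def by auto
  have "path_weight h p = path_weight h p0"
    by (rule covered_path_min_weight[OF hnn UP Une Umin Pmin p covU]) simp
  moreover have "path_weight h r = path_weight h p0"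
    by (rule covered_path_min_weight[OF hnn UP Une Umin Pmin r covU]) simp
  ultimately show ?thesis unfolding cdiff_h by simp
qed

text \<open>Directions along which Q_Phi^= fails to be a singleton: the costs are taken at the
  flows G, the support at the flows F.\<close>
definition equality_direction ::
  "(nat \<Rightarrow> ('v \<times> 'v) \<Rightarrow> real \<Rightarrow> real) \<Rightarrow> nat \<Rightarrow> nat \<Rightarrow> 'v list set \<Rightarrow> (nat \<Rightarrow> nat \<Rightarrow> real)
    \<Rightarrow> (nat \<Rightarrow> 'v list \<Rightarrow> real) \<Rightarrow> (nat \<Rightarrow> 'v list \<Rightarrow> real) \<Rightarrow> (nat \<Rightarrow> real) \<Rightarrow> bool" where
  "equality_direction C m z P \<Phi> G F x \<longleftrightarrow> (\<Sum>s<m. \<bar>x s\<bar>) = 1 \<and> (\<Sum>s<m. x s) = 0 \<and>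
     (\<forall>u<z. \<forall>p\<in>P. \<forall>r\<in>P. F u p > 0 \<longrightarrow> F u r > 0 \<longrightarrow> cdiff C m P \<Phi> G u p r x = 0)"

text \<open>When the edge support of F lies in that of G, every path used by F is covered by the
  support of G, so the prior and another point of Q_Phi differ by an equality direction.\<close>
lemma not_identifying_imp_equality_direction:
  assumes finE: "finite E"
    and cost: "\<forall>s<m. \<forall>e\<in>E. \<forall>x\<ge>0. C s e x \<ge> 0"
    and \<Phi>: "\<forall>u<z. \<forall>s<m. \<Phi> u s \<ge> 0"
    and qh: "qh \<in> simplex m"
    and G: "\<forall>u<z. G u \<in> wardrop C m (od_paths E vo vd) (posterior m \<Phi> qh u)"
    and N: "\<forall>u<z. (\<Sum>l<m. \<Phi> u l * qh l) > 0"
    and QP: "Q_Phi C m z (od_paths E vo vd) \<Phi> G \<noteq> {qh}"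
    and F: "\<forall>u<z. feasible_flow (od_paths E vo vd) (F u)"
    and supp: "\<forall>u<z. \<forall>e\<in>E. edge_flow (od_paths E vo vd) (F u) e > 0 \<longrightarrow>
      edge_flow (od_paths E vo vd) (G u) e > 0"
  shows "\<exists>x. equality_direction C m z (od_paths E vo vd) \<Phi> G F x"
proof -
  let ?P = "od_paths E vo vd"
  have qhQ: "qh \<in> Q_Phi C m z ?P \<Phi> G" by (rule prior_in_Q_Phi[OF qh G N])
  then obtain \<psi> where \<psi>: "\<psi> \<in> Q_Phi C m z ?P \<Phi> G" "\<psi> \<noteq> qh" using QP by blast
  have \<psi>s: "\<psi> \<in> simplex m" using \<psi>(1) by (simp add: Q_Phi_def)
  have "\<exists>s<m. \<psi> s \<noteq> qh s"
  proof (rule ccontr)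
    assume "\<not> ?thesis"
    then have "\<psi> s = qh s" for s using \<psi>s qh by (cases "s < m") (auto simp: simplex_def)
    then show False using \<psi>(2) by auto
  qed
  then obtain s0 where s0: "s0 < m" "\<psi> s0 \<noteq> qh s0" by blast
  define M where "M = (\<Sum>s<m. \<bar>\<psi> s - qh s\<bar>)"
  have "\<bar>\<psi> s0 - qh s0\<bar> \<le> M" unfolding M_def by (rule member_le_sum) (use s0 in auto)
  then have M: "M > 0" using s0 by linarith
  define x where "x s = (1/M) * \<psi> s + (-1/M) * qh s" for s
  have x: "x s = (\<psi> s - qh s) / M" for s unfolding x_def by (simp add: diff_divide_distrib)
  have covered: "\<forall>a\<in>{p, r}. \<forall>e\<in>path_edges a. edge_flow ?P (G u) e > 0"
    if "u < z" "p \<in> ?P" "r \<in> ?P" "F u p > 0" "F u r > 0" for u p r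
  proof (intro ballI)
    fix a e assume a: "a \<in> {p, r}" and e: "e \<in> path_edges a"
    have "F u a \<le> edge_flow ?P (F u) e"
      unfolding edge_flow_def using a e that F finite_od_paths[OF finE]
      by (intro member_le_sum) (auto simp: feasible_flow_def)
    moreover have "e \<in> E" using a e that by (auto simp: od_paths_def)
    ultimately show "edge_flow ?P (G u) e > 0" using supp a that by fastforce
  qed
  have "equality_direction C m z ?P \<Phi> G F x"
    unfolding equality_direction_def
  proof (intro conjI allI impI ballI)
    show "(\<Sum>s<m. \<bar>x s\<bar>) = 1" unfolding x using M by (simp add: sum_divide_distrib[symmetric] M_def)
    show "(\<Sum>s<m. x s) = 0" unfolding x using \<psi>s qh
      by (simp add: sum_divide_distrib[symmetric] sum_subtractf simplex_def)
    fix u p r assume upr: "u < z" "p \<in> ?P" "r \<in> ?P" "F u p > 0" "F u r > 0"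
    note zero = Q_Phi_cdiff_zero_on_covered[where G = G and u = u,
        OF finE cost \<Phi> _ upr(1) G[rule_format, OF upr(1)] upr(2,3) covered[OF upr]]
    have "cdiff C m ?P \<Phi> G u p r \<psi> = 0" "cdiff C m ?P \<Phi> G u p r qh = 0"
      using zero[OF \<psi>(1)] zero[OF qhQ] .
    then show "cdiff C m ?P \<Phi> G u p r x = 0" unfolding x_def cdiff_linear by simp
  qed
  then show ?thesis by blast
qed

lemma Q_eq_Phi_not_singleton:
  assumes q: "q \<in> Q_eq_Phi C m z P \<Phi> F" and l: "equality_direction C m z P \<Phi> F F l"
  shows "Q_eq_Phi C m z P \<Phi> F \<noteq> {q}"
proof
  assume single: "Q_eq_Phi C m z P \<Phi> F = {q}"
  have q_sum: "(\<Sum>s<m. q s) = 1"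
    and q_eq: "\<forall>u<z. \<forall>p\<in>P. \<forall>r\<in>P. F u p > 0 \<longrightarrow> F u r > 0 \<longrightarrow> cdiff C m P \<Phi> F u p r q = 0"
    using q by (simp_all add: Q_eq_Phi_def)
  have l_abs: "(\<Sum>s<m. \<bar>l s\<bar>) = 1" and l_sum: "(\<Sum>s<m. l s) = 0"
    and l_eq: "\<forall>u<z. \<forall>p\<in>P. \<forall>r\<in>P. F u p > 0 \<longrightarrow> F u r > 0 \<longrightarrow> cdiff C m P \<Phi> F u p r l = 0"
    using l by (simp_all add: equality_direction_def)
  define \<psi> where "\<psi> s = (if s < m then q s + l s else 0)" for s
  have \<psi>_cdiff: "cdiff C m P \<Phi> F u p r \<psi> = cdiff C m P \<Phi> F u p r (\<lambda>s. 1 * q s + 1 * l s)" for u p r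
    unfolding cdiff_def by (rule sum.cong) (auto simp: \<psi>_def)
  have "\<psi> \<in> Q_eq_Phi C m z P \<Phi> F"
    unfolding Q_eq_Phi_def
  proof (intro CollectI conjI allI impI ballI)
    show "\<psi> s = 0" if "m \<le> s" for s using that by (simp add: \<psi>_def)
    show "(\<Sum>s<m. \<psi> s) = 1" using q_sum l_sum by (simp add: \<psi>_def sum.distrib)
    fix u p r assume "u < z" "p \<in> P" "r \<in> P" "F u p > 0" "F u r > 0"
    then show "cdiff C m P \<Phi> F u p r \<psi> = 0"
      using q_eq l_eq unfolding \<psi>_cdiff cdiff_linear by simp
  qed
  then have "\<psi> = q" using single by blast
  then have "q s + l s = q s" if "s < m" for s using \<psi>_def[of s] that by simp
  then have "l s = 0" if "s < m" for s using that by fastforce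
  then show False using l_abs by simp
qed

section \<open>Perturbing the prior\<close>

lemma bounded_coordinates_convergent_subseq:
  fixes X :: "nat \<Rightarrow> nat \<Rightarrow> real"
  assumes "\<And>k s. s < m \<Longrightarrow> \<bar>X k s\<bar> \<le> B"
  shows "\<exists>r l. strict_mono r \<and> (\<forall>s<m. (\<lambda>k. X (r k) s) \<longlonglongrightarrow> l s)"
  using assms
proof (induction m)
  case 0
  show ?case by (rule exI[of _ id], rule exI[of _ "\<lambda>_. 0"]) (auto simp: strict_mono_def)
next
  case (Suc m)
  then obtain r l where r: "strict_mono r" "\<forall>s<m. (\<lambda>k. X (r k) s) \<longlonglongrightarrow> l s" by force
  obtain f where f: "strict_mono f" "monoseq (\<lambda>k. X (r (f k)) m)"
    using seq_monosub[of "\<lambda>k. X (r k) m"] by blast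
  have "Bseq (\<lambda>k. X (r (f k)) m)" using Suc.prems by (intro BseqI'[of _ B]) auto
  then obtain L where L: "(\<lambda>k. X (r (f k)) m) \<longlonglongrightarrow> L"
    using f(2) Bseq_monoseq_convergent convergent_def by blast
  have "(\<lambda>k. X ((r \<circ> f) k) s) \<longlonglongrightarrow> (l(m := L)) s" if "s < Suc m" for s
  proof (cases "s = m")
    case False
    then have "((\<lambda>k. X (r k) s) \<circ> f) \<longlonglongrightarrow> l s"
      by (intro LIMSEQ_subseq_LIMSEQ) (use that r(2) f(1) in auto)
    then show ?thesis using False by (simp add: comp_def)
  qed (use L in simp)
  moreover have "strict_mono (r \<circ> f)" using r(1) f(1) by (rule strict_mono_o)
  ultimately show ?case by blast
qed

lemma tendsto_coordinate_of_dist: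
  fixes m :: nat
  assumes s: "s < m" and dist: "\<And>n. sqrt (\<Sum>s<m. (q s - Q n s)\<^sup>2) < inverse (real (Suc n))"
  shows "(\<lambda>n. Q n s) \<longlonglongrightarrow> q s"
proof -
  have bound: "\<bar>Q n s - q s\<bar> \<le> inverse (real (Suc n))" for n
  proof -
    have "\<bar>Q n s - q s\<bar> = sqrt ((q s - Q n s)\<^sup>2)" by simp
    also have "\<dots> \<le> sqrt (\<Sum>s<m. (q s - Q n s)\<^sup>2)"
      by (intro real_sqrt_le_mono member_le_sum) (use s in auto)
    also have "\<dots> \<le> inverse (real (Suc n))" using dist[of n] by simp
    finally show ?thesis .
  qed
  have "(\<lambda>n. \<bar>Q n s - q s\<bar>) \<longlonglongrightarrow> 0"
  proof (rule real_tendsto_sandwich[where f = "\<lambda>_. 0" and h = "\<lambda>n. inverse (real (Suc n))"])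
    show "eventually (\<lambda>n. \<bar>Q n s - q s\<bar> \<le> inverse (real (Suc n))) sequentially"
      using bound by simp
    show "(\<lambda>n. inverse (real (Suc n))) \<longlonglongrightarrow> 0" by (rule LIMSEQ_inverse_real_of_nat)
  qed simp_all
  then show ?thesis by (simp add: tendsto_rabs_zero_iff LIM_zero_iff)
qed

lemma posterior_in_simplex:
  assumes \<Phi>: "\<forall>s<m. \<Phi> u s \<ge> 0" and q: "q \<in> simplex m" and N: "(\<Sum>l<m. \<Phi> u l * q l) > 0"
  shows "posterior m \<Phi> q u \<in> simplex m"
proof -
  have "(\<Sum>s<m. \<Phi> u s * q s / (\<Sum>l<m. \<Phi> u l * q l)) = 1"
    using N by (simp add: sum_divide_distrib[symmetric])
  moreover have "\<Phi> u s * q s / (\<Sum>l<m. \<Phi> u l * q l) \<ge> 0" if "s < m" for s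
    using \<Phi> q N that by (simp add: simplex_def)
  ultimately show ?thesis by (simp add: simplex_def posterior_def)
qed

lemma posterior_tendsto:
  assumes lim: "\<forall>s<m. (\<lambda>n. Q n s) \<longlonglongrightarrow> q s" and N: "(\<Sum>l<m. \<Phi> u l * q l) \<noteq> 0"
  shows "(\<lambda>n. posterior m \<Phi> (Q n) u s) \<longlonglongrightarrow> posterior m \<Phi> q u s"
proof (cases "s < m")
  case True
  have "(\<lambda>n. \<Phi> u s * Q n s / (\<Sum>l<m. \<Phi> u l * Q n l)) \<longlonglongrightarrow> \<Phi> u s * q s / (\<Sum>l<m. \<Phi> u l * q l)"
    using lim True N by (intro tendsto_divide tendsto_mult tendsto_sum tendsto_const) auto
  then show ?thesis using True by (simp add: posterior_def)
qed (simp add: posterior_def)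

lemma path_cost_tendsto:
  assumes cont: "\<forall>e\<in>path_edges p. continuous_on {0..} (C s e)"
    and F: "feasible_flow P F" and G: "\<And>n. feasible_flow P (G n)"
    and lim: "\<forall>e\<in>path_edges p. (\<lambda>n. edge_flow P (G n) e) \<longlonglongrightarrow> edge_flow P F e"
  shows "(\<lambda>n. path_cost C P s (G n) p) \<longlonglongrightarrow> path_cost C P s F p"
  unfolding path_cost_def
proof (rule tendsto_sum)
  fix e assume e: "e \<in> path_edges p"
  show "(\<lambda>n. C s e (edge_flow P (G n) e)) \<longlonglongrightarrow> C s e (edge_flow P F e)"
    by (rule continuous_on_tendsto_compose[OF cont[rule_format, OF e] lim[rule_format, OF e]])
      (simp_all add: edge_flow_nonneg F G)
qed

lemma eventually_all_pos_of_tendsto: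
  fixes x :: "'a \<Rightarrow> real"
  assumes "finite A" "\<And>a. a \<in> A \<Longrightarrow> ((\<lambda>n. y n a) \<longlongrightarrow> x a) F"
  shows "eventually (\<lambda>n. \<forall>a\<in>A. 0 < x a \<longrightarrow> 0 < y n a) F"
proof (rule eventually_ball_finite[OF assms(1)], intro ballI)
  fix a assume a: "a \<in> A"
  show "eventually (\<lambda>n. 0 < x a \<longrightarrow> 0 < y n a) F"
  proof (cases "0 < x a")
    case True
    then show ?thesis using order_tendstoD(1)[OF assms(2)[OF a] True] by (auto elim: eventually_mono)
  qed simp
qed

text \<open>By compactness of the 1-norm unit sphere.\<close>
lemma equality_direction_limit:
  assumes ev: "eventually (\<lambda>n. \<exists>x. equality_direction C m z P \<Phi> (G n) F x) sequentially"
    and lim: "\<And>u p s. u < z \<Longrightarrow> p \<in> P \<Longrightarrow> s < m \<Longrightarrow>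
      (\<lambda>n. path_cost C P s (G n u) p) \<longlonglongrightarrow> path_cost C P s (F u) p"
  shows "\<exists>l. equality_direction C m z P \<Phi> F F l"
proof -
  obtain N where "\<forall>n\<ge>N. \<exists>x. equality_direction C m z P \<Phi> (G n) F x"
    using ev unfolding eventually_sequentially ..
  then have "\<forall>n. \<exists>x. N \<le> n \<longrightarrow> equality_direction C m z P \<Phi> (G n) F x" by simp
  then obtain X where X: "\<And>n. n \<ge> N \<Longrightarrow> equality_direction C m z P \<Phi> (G n) F (X n)"
    by (metis choice)
  define Y where "Y k = X (k + N)" for k
  have Y: "equality_direction C m z P \<Phi> (G (k + N)) F (Y k)" for k unfolding Y_def by (rule X) simp
  have "\<bar>Y k s\<bar> \<le> 1" if "s < m" for k s
  proof -
    have "\<bar>Y k s\<bar> \<le> (\<Sum>s<m. \<bar>Y k s\<bar>)" by (rule member_le_sum) (use that in auto)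
    also have "\<dots> = 1" using Y[of k] unfolding equality_direction_def by blast
    finally show ?thesis .
  qed
  then obtain r l where r: "strict_mono r" and Yl: "\<forall>s<m. (\<lambda>k. Y (r k) s) \<longlonglongrightarrow> l s"
    using bounded_coordinates_convergent_subseq[where X = Y and B = 1] by blast
  define R where "R k = r k + N" for k
  have R: "strict_mono R" using r unfolding R_def strict_mono_def by simp
  have YR: "equality_direction C m z P \<Phi> (G (R k)) F (Y (r k))" for k unfolding R_def by (rule Y)
  then have YR_abs: "(\<Sum>s<m. \<bar>Y (r k) s\<bar>) = 1" and YR_sum: "(\<Sum>s<m. Y (r k) s) = 0"
    and YR_eq: "\<And>u p p'. u < z \<Longrightarrow> p \<in> P \<Longrightarrow> p' \<in> P \<Longrightarrow> F u p > 0 \<Longrightarrow> F u p' > 0 \<Longrightarrow>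
      cdiff C m P \<Phi> (G (R k)) u p p' (Y (r k)) = 0" for k
    unfolding equality_direction_def by blast+
  have "equality_direction C m z P \<Phi> F F l"
    unfolding equality_direction_def
  proof (intro conjI allI impI ballI)
    have "(\<lambda>k. \<Sum>s<m. \<bar>Y (r k) s\<bar>) \<longlonglongrightarrow> (\<Sum>s<m. \<bar>l s\<bar>)"
      using Yl by (intro tendsto_sum tendsto_rabs) auto
    then show "(\<Sum>s<m. \<bar>l s\<bar>) = 1" unfolding YR_abs LIMSEQ_const_iff by simp
    have "(\<lambda>k. \<Sum>s<m. Y (r k) s) \<longlonglongrightarrow> (\<Sum>s<m. l s)" using Yl by (intro tendsto_sum) auto
    then show "(\<Sum>s<m. l s) = 0" unfolding YR_sum LIMSEQ_const_iff by simp
    fix u p p' assume upp': "u < z" "p \<in> P" "p' \<in> P" "F u p > 0" "F u p' > 0"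
    have cost_lim: "(\<lambda>k. path_cost C P s (G (R k) u) a) \<longlonglongrightarrow> path_cost C P s (F u) a"
      if "a \<in> P" "s < m" for a s
      using LIMSEQ_subseq_LIMSEQ[OF lim[OF upp'(1) that] R] by (simp add: comp_def)
    have "(\<lambda>k. cdiff C m P \<Phi> (G (R k)) u p p' (Y (r k))) \<longlonglongrightarrow> cdiff C m P \<Phi> F u p p' l"
      unfolding cdiff_def
    proof (intro tendsto_sum tendsto_mult tendsto_diff tendsto_const)
      fix s assume "s \<in> {..<m}"
      then show "(\<lambda>k. Y (r k) s) \<longlonglongrightarrow> l s"
        and "(\<lambda>k. path_cost C P s (G (R k) u) p) \<longlonglongrightarrow> path_cost C P s (F u) p"
        and "(\<lambda>k. path_cost C P s (G (R k) u) p') \<longlonglongrightarrow> path_cost C P s (F u) p'"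
        using Yl cost_lim upp'(2,3) by auto
    qed
    then show "cdiff C m P \<Phi> F u p p' l = 0" unfolding YR_eq[OF upp'] LIMSEQ_const_iff by simp
  qed
  then show ?thesis by blast
qed

lemma posterior_wardrop_edge_flow_tendsto:
  assumes finE: "finite E"
    and cost: "\<forall>s<m. \<forall>e\<in>E. strict_mono_on {0..} (C s e) \<and> (\<forall>x\<ge>0. C s e x \<ge> 0)"
    and \<Phi>: "\<forall>s<m. \<Phi> u s \<ge> 0" and q: "q \<in> simplex m" and N: "(\<Sum>l<m. \<Phi> u l * q l) > 0"
    and Q_lim: "\<forall>s<m. (\<lambda>n. Q n s) \<longlonglongrightarrow> q s"
    and F: "F \<in> wardrop C m (od_paths E vo vd) (posterior m \<Phi> q u)"
    and G: "\<And>n. G n \<in> wardrop C m (od_paths E vo vd) (posterior m \<Phi> (Q n) u)"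
    and e: "e \<in> E"
  shows "(\<lambda>n. edge_flow (od_paths E vo vd) (G n) e) \<longlonglongrightarrow> edge_flow (od_paths E vo vd) F e"
proof (rule wardrop_edge_flow_tendsto[OF finite_od_paths[OF finE] finE _ cost _ _ F G e])
  show "\<forall>p\<in>od_paths E vo vd. path_edges p \<subseteq> E" by (auto simp: od_paths_def)
  show "posterior m \<Phi> q u \<in> simplex m" using \<Phi> q N by (rule posterior_in_simplex)
  show "\<forall>s<m. (\<lambda>n. posterior m \<Phi> (Q n) u s) \<longlonglongrightarrow> posterior m \<Phi> q u s"
    using posterior_tendsto[OF Q_lim] N by (metis less_irrefl)
qed

lemma non_identified_priors_not_tendsto:
  assumes finE: "finite E"
    and cost: "\<forall>s<m. \<forall>e\<in>E. continuous_on {0..} (C s e) \<and> strict_mono_on {0..} (C s e)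
                  \<and> (\<forall>x\<ge>0. C s e x \<ge> 0)"
    and q: "q \<in> simplex m" and \<Phi>: "\<forall>u<z. \<forall>s<m. \<Phi> u s \<ge> 0"
    and sig_pos: "\<forall>u<z. (\<Sum>l<m. \<Phi> u l * q l) > 0"
    and obs: "\<forall>u<z. F u \<in> wardrop C m (od_paths E vo vd) (posterior m \<Phi> q u)"
    and Q_eq: "Q_eq_Phi C m z (od_paths E vo vd) \<Phi> F = {q}"
    and Q: "\<And>n. Q n \<in> simplex m" and Q_lim: "\<forall>s<m. (\<lambda>n. Q n s) \<longlonglongrightarrow> q s"
    and G: "\<And>n. \<forall>u<z. G n u \<in> wardrop C m (od_paths E vo vd) (posterior m \<Phi> (Q n) u)"
    and not_ident: "\<And>n. Q_Phi C m z (od_paths E vo vd) \<Phi> (G n) \<noteq> {Q n}"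
  shows False
proof -
  let ?P = "od_paths E vo vd"
  have F: "\<forall>u<z. feasible_flow ?P (F u)" using obs by (simp add: wardrop_def)
  have cost_mono: "\<forall>s<m. \<forall>e\<in>E. strict_mono_on {0..} (C s e) \<and> (\<forall>x\<ge>0. C s e x \<ge> 0)"
    and cost_nonneg: "\<forall>s<m. \<forall>e\<in>E. \<forall>x\<ge>0. C s e x \<ge> 0" using cost by blast+
  have edge_lim: "(\<lambda>n. edge_flow ?P (G n u) e) \<longlonglongrightarrow> edge_flow ?P (F u) e"
    if u: "u < z" and "e \<in> E" for u e
    by (rule posterior_wardrop_edge_flow_tendsto[where \<Phi> = \<Phi> and u = u and G = "\<lambda>n. G n u",
          OF finE cost_mono _ q _ Q_lim])
      (use u \<open>e \<in> E\<close> \<Phi> sig_pos obs G in auto)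
  have "eventually (\<lambda>n. \<forall>u\<in>{..<z}.
      0 < (\<Sum>l<m. \<Phi> u l * q l) \<longrightarrow> 0 < (\<Sum>l<m. \<Phi> u l * Q n l)) sequentially"
    using Q_lim
    by (intro eventually_all_pos_of_tendsto[where y = "\<lambda>n u. \<Sum>l<m. \<Phi> u l * Q n l"]
        tendsto_sum tendsto_mult tendsto_const) auto
  moreover have "eventually (\<lambda>n. \<forall>a\<in>{..<z} \<times> E. 0 < edge_flow ?P (F (fst a)) (snd a)
      \<longrightarrow> 0 < edge_flow ?P (G n (fst a)) (snd a)) sequentially"
    using finE edge_lim
    by (intro eventually_all_pos_of_tendsto[where y = "\<lambda>n a. edge_flow ?P (G n (fst a)) (snd a)"]) auto
  ultimately have "eventually (\<lambda>n. \<exists>x. equality_direction C m z ?P \<Phi> (G n) F x) sequentially"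
  proof eventually_elim
    case (elim n)
    show ?case
    proof (rule not_identifying_imp_equality_direction[OF finE cost_nonneg \<Phi> Q G _ not_ident F])
      show "\<forall>u<z. 0 < (\<Sum>l<m. \<Phi> u l * Q n l)" using elim(1) sig_pos by simp
      show "\<forall>u<z. \<forall>e\<in>E. 0 < edge_flow ?P (F u) e \<longrightarrow> 0 < edge_flow ?P (G n u) e" using elim(2) by simp
    qed
  qed
  moreover have "(\<lambda>n. path_cost C ?P s (G n u) p) \<longlonglongrightarrow> path_cost C ?P s (F u) p"
    if "u < z" "p \<in> ?P" "s < m" for u p s
  proof (rule path_cost_tendsto)
    have "path_edges p \<subseteq> E" using that by (simp add: od_paths_def)
    then show "\<forall>e\<in>path_edges p. continuous_on {0..} (C s e)"
      and "\<forall>e\<in>path_edges p. (\<lambda>n. edge_flow ?P (G n u) e) \<longlonglongrightarrow> edge_flow ?P (F u) e"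
      using that cost edge_lim by blast+
    show "feasible_flow ?P (F u)" using F that by blast
    show "feasible_flow ?P (G n u)" for n using G that by (simp add: wardrop_def)
  qed
  ultimately have "\<exists>l. equality_direction C m z ?P \<Phi> F F l" by (rule equality_direction_limit)
  moreover have "q \<in> Q_eq_Phi C m z ?P \<Phi> F" using Q_eq by blast
  ultimately show False using Q_eq Q_eq_Phi_not_singleton by blast
qed

theorem lemma9:
  fixes E :: "('v \<times> 'v) set" and vo vd :: 'v and m z :: nat
    and C :: "nat \<Rightarrow> ('v \<times> 'v) \<Rightarrow> real \<Rightarrow> real"
    and \<Phi> :: "nat \<Rightarrow> nat \<Rightarrow> real" and q :: "nat \<Rightarrow> real"
    and F :: "nat \<Rightarrow> 'v list \<Rightarrow> real"
  assumes finE: "finite E"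
    and cost: "\<forall>s<m. \<forall>e\<in>E. continuous_on {0..} (C s e) \<and> strict_mono_on {0..} (C s e)
                  \<and> (\<forall>x\<ge>0. C s e x \<ge> 0)"
    and q_simplex: "q \<in> simplex m" and q_pos: "\<forall>s<m. q s > 0"
    and scheme: "signalling_scheme z m \<Phi>"
    and sig_pos: "\<forall>u<z. (\<Sum>l<m. \<Phi> u l * q l) > 0"
    and obs: "\<forall>u<z. F u \<in> wardrop C m (od_paths E vo vd) (posterior m \<Phi> q u)"
    and q_ident: "Q_Phi C m z (od_paths E vo vd) \<Phi> F = {q}"
    and Q_eq: "Q_eq_Phi C m z (od_paths E vo vd) \<Phi> F = {q}"
  shows "\<exists>\<delta>>0. \<forall>qh\<in>simplex m. sqrt (\<Sum>s<m. (q s - qh s)\<^sup>2) < \<delta> \<longrightarrow>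
            identifying C m z (od_paths E vo vd) \<Phi> qh"
proof (rule ccontr)
  let ?P = "od_paths E vo vd"
  assume neg: "\<not> ?thesis"
  have ex_Q: "\<forall>n. \<exists>qh. qh \<in> simplex m \<and> sqrt (\<Sum>s<m. (q s - qh s)\<^sup>2) < inverse (real (Suc n)) \<and>
      \<not> identifying C m z ?P \<Phi> qh"
  proof
    fix n :: nat
    have "inverse (real (Suc n)) > 0" by simp
    then show "\<exists>qh. qh \<in> simplex m \<and> sqrt (\<Sum>s<m. (q s - qh s)\<^sup>2) < inverse (real (Suc n)) \<and>
      \<not> identifying C m z ?P \<Phi> qh" using neg by blast
  qed
  obtain Q where Q: "\<And>n. Q n \<in> simplex m" "\<And>n. sqrt (\<Sum>s<m. (q s - Q n s)\<^sup>2) < inverse (real (Suc n))"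
    and not_ident: "\<And>n. \<not> identifying C m z ?P \<Phi> (Q n)"
    using choice[OF ex_Q] by blast
  have ex_G: "\<forall>n. \<exists>G. (\<forall>u<z. G u \<in> wardrop C m ?P (posterior m \<Phi> (Q n) u)) \<and>
      Q_Phi C m z ?P \<Phi> G \<noteq> {Q n}"
    using not_ident unfolding identifying_def by blast
  obtain G where G: "\<And>n. \<forall>u<z. G n u \<in> wardrop C m ?P (posterior m \<Phi> (Q n) u)"
      and G_not_ident: "\<And>n. Q_Phi C m z ?P \<Phi> (G n) \<noteq> {Q n}"
    using choice[OF ex_G] by blast
  have Q_lim: "\<forall>s<m. (\<lambda>n. Q n s) \<longlonglongrightarrow> q s" using tendsto_coordinate_of_dist Q(2) by blast
  have \<Phi>: "\<forall>u<z. \<forall>s<m. \<Phi> u s \<ge> 0" using scheme by (simp add: signalling_scheme_def)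
  show False
    by (rule non_identified_priors_not_tendsto[OF finE cost q_simplex \<Phi> sig_pos obs Q_eq Q(1) Q_lim G G_not_ident])
qed

end
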